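(* Let $(X,m)$ be a $\sigma$-finite measure space and let $Q$ with domain $\mathcal D$ and $Q^\#$ with domain $\mathcal D^\#$ be Dirichlet forms on $L^2(X,m)$ such that $\mathcal D\subseteq\mathcal D^\#$ and $Q^\#=Q$ on $\mathcal D\times\mathcal D$. Then the following are equivalent: (i) $\mathcal D=\mathcal D^\#$; (ii) there is no nontrivial $u\in D(L')$ with $L'u=-u$.
   Context: A Dirichlet form on $L^2(X,m)$ is a densely defined, nonnegative, closed, symmetric bilinear form satisfying the contraction property. $\langle\cdot,\cdot\rangle$ denotes the $L^2(X,m)$ inner product. The operator $L'$ has domain $D(L')=\{u\in\mathcal D^\#\mid \exists w\in L^2(X,m)\text{ with } Q^\#(u,v)=\langle w,v\rangle\text{ for all }v\in\mathcal D\}$ and acts by $L'u=w$. *)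

theory Defs
  imports "HOL-Analysis.Analysis"
begin

text \<open>Real-valued L^2(X,m), realised on representative functions.
  Elements of L^2 are identified when equal m-a.e.\<close>

definition L2 :: "'a measure \<Rightarrow> ('a \<Rightarrow> real) set" where
  "L2 M = {f. f \<in> borel_measurable M \<and> integrable M (\<lambda>x. (f x)\<^sup>2)}"

definition l2_inner :: "'a measure \<Rightarrow> ('a \<Rightarrow> real) \<Rightarrow> ('a \<Rightarrow> real) \<Rightarrow> real" where
  "l2_inner M f g = (\<integral>x. f x * g x \<partial>M)"

definition l2_normsq :: "'a measure \<Rightarrow> ('a \<Rightarrow> real) \<Rightarrow> real" where
  "l2_normsq M f = (\<integral>x. (f x)\<^sup>2 \<partial>M)"

definition normal_contraction :: "(real \<Rightarrow> real) \<Rightarrow> bool" where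
  "normal_contraction C \<longleftrightarrow> C 0 = 0 \<and> (\<forall>s t. \<bar>C s - C t\<bar> \<le> \<bar>s - t\<bar>)"

definition form_normsq ::
  "'a measure \<Rightarrow> (('a \<Rightarrow> real) \<Rightarrow> ('a \<Rightarrow> real) \<Rightarrow> real) \<Rightarrow> ('a \<Rightarrow> real) \<Rightarrow> real" where
  "form_normsq M Q u = Q u u + l2_normsq M u"

text \<open>A Dirichlet form (Q, D) on L^2(X,m): D is a (a.e.-saturated) linear subspace of L^2,
  Q is a well-defined (on a.e.-classes) symmetric bilinear nonnegative form on D,
  D is dense in L^2, the form is closed (D complete w.r.t. the form norm), and
  the contraction property holds for all normal contractions.\<close>
definition dirichlet_form ::
  "'a measure \<Rightarrow> ('a \<Rightarrow> real) set \<Rightarrow> (('a \<Rightarrow> real) \<Rightarrow> ('a \<Rightarrow> real) \<Rightarrow> real) \<Rightarrow> bool" where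
  "dirichlet_form M D Q \<longleftrightarrow>
     D \<subseteq> L2 M
   \<and> (\<forall>u\<in>D. \<forall>v. v \<in> borel_measurable M \<and> (AE x in M. u x = v x) \<longrightarrow> v \<in> D)
   \<and> (\<lambda>x. 0) \<in> D
   \<and> (\<forall>u\<in>D. \<forall>v\<in>D. (\<lambda>x. u x + v x) \<in> D)
   \<and> (\<forall>u\<in>D. \<forall>a::real. (\<lambda>x. a * u x) \<in> D)
   \<and> (\<forall>u\<in>D. \<forall>u'\<in>D. \<forall>v\<in>D. (AE x in M. u x = u' x) \<longrightarrow> Q u v = Q u' v)
   \<and> (\<forall>u\<in>D. \<forall>v\<in>D. Q u v = Q v u)
   \<and> (\<forall>u\<in>D. \<forall>v\<in>D. \<forall>w\<in>D. \<forall>a b::real.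
        Q (\<lambda>x. a * u x + b * v x) w = a * Q u w + b * Q v w)
   \<and> (\<forall>u\<in>D. Q u u \<ge> 0)
   \<and> (\<forall>f\<in>L2 M. \<forall>e>0. \<exists>u\<in>D. l2_normsq M (\<lambda>x. f x - u x) < e)
   \<and> (\<forall>s. (\<forall>n. s n \<in> D) \<and>
          (\<forall>e>0. \<exists>N. \<forall>n\<ge>N. \<forall>k\<ge>N. form_normsq M Q (\<lambda>x. s n x - s k x) < e)
        \<longrightarrow> (\<exists>u\<in>D. (\<lambda>n. form_normsq M Q (\<lambda>x. s n x - u x)) \<longlonglongrightarrow> 0))
   \<and> (\<forall>C. normal_contraction C \<longrightarrow>
        (\<forall>u\<in>D. (\<lambda>x. C (u x)) \<in> D \<and> Q (\<lambda>x. C (u x)) (\<lambda>x. C (u x)) \<le> Q u u))"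

text \<open>Graph of the operator L': D(L') = {u \<in> D# | \<exists>w \<in> L^2. Q#(u,v) = <w,v> for all v \<in> D},
  L'u = w.  (w is unique up to a.e. equality since D is dense.)\<close>
definition Lprime_graph ::
  "'a measure \<Rightarrow> ('a \<Rightarrow> real) set \<Rightarrow> ('a \<Rightarrow> real) set
   \<Rightarrow> (('a \<Rightarrow> real) \<Rightarrow> ('a \<Rightarrow> real) \<Rightarrow> real) \<Rightarrow> (('a \<Rightarrow> real) \<times> ('a \<Rightarrow> real)) set" where
  "Lprime_graph M D Dsharp Qsharp =
     {(u, w). u \<in> Dsharp \<and> w \<in> L2 M \<and> (\<forall>v\<in>D. Qsharp u v = l2_inner M w v)}"

end

theory Submission
  imports Defs
begin

text \<open>
  The form Q#_1(u,v) = Q#(u,v) + <u,v> is a semi-inner product on D#, and a pair (u, -u) lies in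
  the graph of L' exactly when u \<in> D# is Q#_1-orthogonal to D.  If D = D#, such a u is
  orthogonal to itself, hence has L^2-norm 0.  Conversely, on D the form Q#_1 coincides with
  Q_1, for which D is complete; so every w \<in> D# has an orthogonal projection u0 onto D,
  obtained as the limit of a minimizing sequence for Q#_1(w - v), v \<in> D.  For w \<notin> D the
  difference w - u0 is a nontrivial solution of L'u = -u.
\<close>

lemma quadratic_nonneg_discriminant:
  fixes a b c :: real
  assumes "\<And>t. 0 \<le> c - 2 * t * b + t\<^sup>2 * a" and "0 \<le> a"
  shows "b\<^sup>2 \<le> a * c"
proof (cases "a = 0")
  case True
  show ?thesis
  proof (cases "b = 0")
    case False
    have "0 \<le> c - 2 * ((c + 1) / (2 * b)) * b" using assms(1)[of "(c + 1) / (2 * b)"] True by simp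
    then show ?thesis using False by simp
  qed (simp add: True)
next
  case False
  then have "0 < a" using assms(2) by simp
  moreover have "0 \<le> c - 2 * (b / a) * b + (b / a)\<^sup>2 * a" by (rule assms(1))
  ultimately show ?thesis by (simp add: power2_eq_square field_simps)
qed

definition lin_comb :: "real \<Rightarrow> ('a \<Rightarrow> real) \<Rightarrow> real \<Rightarrow> ('a \<Rightarrow> real) \<Rightarrow> 'a \<Rightarrow> real" where
  "lin_comb a u b v = (\<lambda>x. a * u x + b * v x)"

lemma lin_comb_1_minus_1: "lin_comb 1 u (-1) v = (\<lambda>x. u x - v x)"
  by (simp add: lin_comb_def)

definition form_complete :: "('a \<Rightarrow> real) set \<Rightarrow> (('a \<Rightarrow> real) \<Rightarrow> ('a \<Rightarrow> real) \<Rightarrow> real) \<Rightarrow> bool" where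
  "form_complete U B \<longleftrightarrow>
     (\<forall>s. (\<forall>n. s n \<in> U) \<and>
          (\<forall>e>0. \<exists>N. \<forall>n\<ge>N. \<forall>k\<ge>N. B (\<lambda>x. s n x - s k x) (\<lambda>x. s n x - s k x) < e)
        \<longrightarrow> (\<exists>u\<in>U. (\<lambda>n. B (\<lambda>x. s n x - u x) (\<lambda>x. s n x - u x)) \<longlonglongrightarrow> 0))"

locale semi_inner_product =
  fixes V :: "('a \<Rightarrow> real) set"
    and B :: "('a \<Rightarrow> real) \<Rightarrow> ('a \<Rightarrow> real) \<Rightarrow> real"
  assumes lin_comb_closed: "u \<in> V \<Longrightarrow> v \<in> V \<Longrightarrow> lin_comb a u b v \<in> V"
    and linear_left: "u \<in> V \<Longrightarrow> v \<in> V \<Longrightarrow> w \<in> V \<Longrightarrow> B (lin_comb a u b v) w = a * B u w + b * B v w"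
    and symmetric: "u \<in> V \<Longrightarrow> v \<in> V \<Longrightarrow> B u v = B v u"
    and nonneg: "u \<in> V \<Longrightarrow> 0 \<le> B u u"
begin

abbreviation quad :: "('a \<Rightarrow> real) \<Rightarrow> real" where
  "quad u \<equiv> B u u"

lemma diff_closed: "u \<in> V \<Longrightarrow> v \<in> V \<Longrightarrow> (\<lambda>x. u x - v x) \<in> V"
  using lin_comb_closed[of u v 1 "-1"] by (simp add: lin_comb_1_minus_1)

lemma quad_lin_comb:
  assumes "x \<in> V" "y \<in> V"
  shows "quad (lin_comb a x b y) = a\<^sup>2 * quad x + 2 * a * b * B x y + b\<^sup>2 * quad y"
proof -
  have z: "lin_comb a x b y \<in> V" using assms by (rule lin_comb_closed)
  have "quad (lin_comb a x b y) = a * B x (lin_comb a x b y) + b * B y (lin_comb a x b y)"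
    using linear_left[OF assms z] .
  also have "B x (lin_comb a x b y) = a * quad x + b * B y x"
    using symmetric[OF assms(1) z] linear_left[OF assms assms(1)] by simp
  also have "B y (lin_comb a x b y) = a * B x y + b * quad y"
    using symmetric[OF assms(2) z] linear_left[OF assms assms(2)] by simp
  finally show ?thesis using symmetric[OF assms] by (simp add: power2_eq_square algebra_simps)
qed

lemma cauchy_schwarz:
  assumes "x \<in> V" "y \<in> V"
  shows "(B x y)\<^sup>2 \<le> quad x * quad y"
proof -
  have "(B y x)\<^sup>2 \<le> quad y * quad x"
  proof (rule quadratic_nonneg_discriminant[OF _ nonneg[OF assms(2)]])
    fix t
    show "0 \<le> quad x - 2 * t * B y x + t\<^sup>2 * quad y"
      using nonneg[OF lin_comb_closed[OF assms, of 1 "-t"]] quad_lin_comb[OF assms, of 1 "-t"]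
        symmetric[OF assms] by simp
  qed
  then show ?thesis using symmetric[OF assms] by (simp add: mult.commute)
qed

lemma quad_triangle:
  assumes "x \<in> V" "y \<in> V"
  shows "quad (lin_comb 1 x 1 y) \<le> quad x + 2 * sqrt (quad x * quad y) + quad y"
proof -
  have "B x y \<le> sqrt (quad x * quad y)"
    using real_le_rsqrt[OF cauchy_schwarz[OF assms]] by simp
  then show ?thesis using quad_lin_comb[OF assms, of 1 1] by simp
qed

lemma minimizer_orthogonal:
  assumes "z \<in> V" "v \<in> V" and min: "\<And>t. quad z \<le> quad (lin_comb 1 z t v)"
  shows "B z v = 0"
proof -
  have "(- B z v)\<^sup>2 \<le> quad v * 0"
  proof (rule quadratic_nonneg_discriminant[OF _ nonneg[OF assms(2)]])
    fix t
    show "0 \<le> 0 - 2 * t * - B z v + t\<^sup>2 * quad v"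
      using min[of t] quad_lin_comb[OF assms(1,2), of 1 t] by simp
  qed
  then show ?thesis by simp
qed

lemma best_approximation_orthogonal:
  assumes "U \<subseteq> V" and U_closed: "\<And>u v a b. u \<in> U \<Longrightarrow> v \<in> U \<Longrightarrow> lin_comb a u b v \<in> U"
    and "w \<in> V" "u0 \<in> U" and best: "\<And>v. v \<in> U \<Longrightarrow> quad (\<lambda>x. w x - u0 x) \<le> quad (\<lambda>x. w x - v x)"
    and "v \<in> U"
  shows "B (\<lambda>x. w x - u0 x) v = 0"
proof (rule minimizer_orthogonal)
  show "(\<lambda>x. w x - u0 x) \<in> V" "v \<in> V" using assms(1,3,4,6) by (auto intro: diff_closed)
  fix t
  have "lin_comb 1 (\<lambda>x. w x - u0 x) t v = (\<lambda>x. w x - lin_comb 1 u0 (-t) v x)"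
    by (simp add: lin_comb_def fun_eq_iff)
  then show "quad (\<lambda>x. w x - u0 x) \<le> quad (lin_comb 1 (\<lambda>x. w x - u0 x) t v)"
    using best[OF U_closed[OF \<open>u0 \<in> U\<close> \<open>v \<in> U\<close>, of 1 "-t"]] by simp
qed

text \<open>The parallelogram law for w - s n and w - s k, whose midpoint w - (s n + s k)/2 is
  again at distance at least d from w.\<close>
lemma minimizing_sequence_Cauchy:
  assumes "U \<subseteq> V" and U_closed: "\<And>u v a b. u \<in> U \<Longrightarrow> v \<in> U \<Longrightarrow> lin_comb a u b v \<in> U"
    and "w \<in> V" and s: "\<And>n. s n \<in> U"
    and inf: "\<And>v. v \<in> U \<Longrightarrow> d \<le> quad (\<lambda>x. w x - v x)"
    and s_min: "\<And>n. quad (\<lambda>x. w x - s n x) < d + inverse (real (Suc n))"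
    and "0 < e"
  shows "\<exists>N. \<forall>n\<ge>N. \<forall>k\<ge>N. quad (\<lambda>x. s n x - s k x) < e"
proof -
  have close: "quad (\<lambda>x. s n x - s k x) < 2 * inverse (real (Suc n)) + 2 * inverse (real (Suc k))" for n k
  proof -
    define a where "a = (\<lambda>x. w x - s n x)"
    define b where "b = (\<lambda>x. w x - s k x)"
    have ab: "a \<in> V" "b \<in> V" unfolding a_def b_def using assms(1,3) s by (auto intro: diff_closed)
    have "lin_comb (1/2) a (1/2) b = (\<lambda>x. w x - lin_comb (1/2) (s n) (1/2) (s k) x)"
      by (simp add: lin_comb_def a_def b_def fun_eq_iff algebra_simps)
    then have "d \<le> quad (lin_comb (1/2) a (1/2) b)" using inf U_closed[OF s s] by simp
    then have "d \<le> quad a / 4 + B a b / 2 + quad b / 4"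
      using quad_lin_comb[OF ab, of "1/2" "1/2"] by (simp add: power2_eq_square)
    moreover have "(\<lambda>x. s n x - s k x) = lin_comb (-1) a 1 b"
      by (simp add: lin_comb_def a_def b_def fun_eq_iff)
    ultimately show ?thesis using quad_lin_comb[OF ab, of "-1" 1] s_min[of n] s_min[of k]
      unfolding a_def b_def by simp
  qed
  obtain N where N: "inverse (real (Suc N)) < e / 4"
    using reals_Archimedean \<open>0 < e\<close> by (metis divide_pos_pos zero_less_numeral)
  have "quad (\<lambda>x. s n x - s k x) < e" if "n \<ge> N" "k \<ge> N" for n k
  proof -
    have "inverse (real (Suc n)) \<le> inverse (real (Suc N))" "inverse (real (Suc k)) \<le> inverse (real (Suc N))"
      using that by (auto intro!: le_imp_inverse_le)
    then show ?thesis using close[of n k] N by linarith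
  qed
  then show ?thesis by blast
qed

lemma quad_diff_le_limit:
  assumes "w \<in> V" "u \<in> V" "\<And>n. s n \<in> V"
    and dist_lim: "(\<lambda>n. quad (\<lambda>x. w x - s n x)) \<longlonglongrightarrow> d"
    and conv: "(\<lambda>n. quad (\<lambda>x. s n x - u x)) \<longlonglongrightarrow> 0"
  shows "quad (\<lambda>x. w x - u x) \<le> d"
proof -
  have "(\<lambda>n. quad (\<lambda>x. w x - s n x) + 2 * sqrt (quad (\<lambda>x. w x - s n x) * quad (\<lambda>x. s n x - u x))
      + quad (\<lambda>x. s n x - u x)) \<longlonglongrightarrow> d + 2 * sqrt (d * 0) + 0"
    using dist_lim conv by (intro tendsto_intros)
  then have bound_lim: "(\<lambda>n. quad (\<lambda>x. w x - s n x) + 2 * sqrt (quad (\<lambda>x. w x - s n x) * quad (\<lambda>x. s n x - u x))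
      + quad (\<lambda>x. s n x - u x)) \<longlonglongrightarrow> d"
    by simp
  have "quad (\<lambda>x. w x - u x) \<le> quad (\<lambda>x. w x - s n x)
      + 2 * sqrt (quad (\<lambda>x. w x - s n x) * quad (\<lambda>x. s n x - u x)) + quad (\<lambda>x. s n x - u x)" for n
  proof -
    have "(\<lambda>x. w x - u x) = lin_comb 1 (\<lambda>x. w x - s n x) 1 (\<lambda>x. s n x - u x)"
      by (simp add: lin_comb_def fun_eq_iff)
    moreover have "(\<lambda>x. w x - s n x) \<in> V" "(\<lambda>x. s n x - u x) \<in> V"
      using assms(1-3) by (auto intro: diff_closed)
    ultimately show ?thesis using quad_triangle by simp
  qed
  then show ?thesis using LIMSEQ_le_const[OF bound_lim] by blast
qed

theorem projection_exists:
  assumes "U \<subseteq> V" and U_closed: "\<And>u v a b. u \<in> U \<Longrightarrow> v \<in> U \<Longrightarrow> lin_comb a u b v \<in> U"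
    and "(\<lambda>x. 0) \<in> U" and "form_complete U B" and "w \<in> V"
  obtains u0 where "u0 \<in> U" "\<And>v. v \<in> U \<Longrightarrow> B (\<lambda>x. w x - u0 x) v = 0"
proof -
  define d where "d = (INF v\<in>U. quad (\<lambda>x. w x - v x))"
  have bdd: "bdd_below ((\<lambda>v. quad (\<lambda>x. w x - v x)) ` U)"
    using assms(1,5) by (intro bdd_belowI2[of _ 0]) (auto intro: nonneg diff_closed)
  have inf: "d \<le> quad (\<lambda>x. w x - v x)" if "v \<in> U" for v
    unfolding d_def using bdd that by (rule cINF_lower)
  have "\<exists>v\<in>U. quad (\<lambda>x. w x - v x) < d + inverse (real (Suc n))" for n
    unfolding d_def using assms(3)
    by (intro cInf_lessD[of "(\<lambda>v. quad (\<lambda>x. w x - v x)) ` U", simplified]) auto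
  then obtain s where s: "\<And>n. s n \<in> U"
    and s_min: "\<And>n. quad (\<lambda>x. w x - s n x) < d + inverse (real (Suc n))"
    by metis
  obtain u0 where u0: "u0 \<in> U" and conv: "(\<lambda>n. quad (\<lambda>x. s n x - u0 x)) \<longlonglongrightarrow> 0"
    using \<open>form_complete U B\<close> s minimizing_sequence_Cauchy[OF assms(1) U_closed assms(5) s inf s_min]
    unfolding form_complete_def by blast
  have "(\<lambda>n. quad (\<lambda>x. w x - s n x)) \<longlonglongrightarrow> d"
  proof (rule real_tendsto_sandwich)
    show "\<forall>\<^sub>F n in sequentially. d \<le> quad (\<lambda>x. w x - s n x)" using inf s by simp
    show "\<forall>\<^sub>F n in sequentially. quad (\<lambda>x. w x - s n x) \<le> d + inverse (real (Suc n))"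
      using s_min by (intro always_eventually allI less_imp_le)
    show "(\<lambda>n. d + inverse (real (Suc n))) \<longlonglongrightarrow> d"
      using tendsto_add[OF tendsto_const LIMSEQ_inverse_real_of_nat] by simp
  qed simp
  then have "quad (\<lambda>x. w x - u0 x) \<le> d"
    using quad_diff_le_limit assms(1,5) s u0 conv by blast
  then have "quad (\<lambda>x. w x - u0 x) \<le> quad (\<lambda>x. w x - v x)" if "v \<in> U" for v
    using inf[OF that] by linarith
  then show thesis
    using that[OF u0] best_approximation_orthogonal[OF assms(1) U_closed assms(5) u0] by blast
qed

end

definition form_inner :: "'a measure \<Rightarrow> (('a \<Rightarrow> real) \<Rightarrow> ('a \<Rightarrow> real) \<Rightarrow> real) \<Rightarrow> ('a \<Rightarrow> real) \<Rightarrow> ('a \<Rightarrow> real) \<Rightarrow> real" where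
  "form_inner M Q u v = Q u v + l2_inner M u v"

lemma
  assumes "dirichlet_form M D Q"
  shows dirichlet_form_L2: "u \<in> D \<Longrightarrow> u \<in> L2 M"
    and dirichlet_form_AE_closed: "u \<in> D \<Longrightarrow> v \<in> borel_measurable M \<Longrightarrow> AE x in M. u x = v x \<Longrightarrow> v \<in> D"
    and dirichlet_form_zero: "(\<lambda>x. 0) \<in> D"
    and dirichlet_form_add: "u \<in> D \<Longrightarrow> v \<in> D \<Longrightarrow> (\<lambda>x. u x + v x) \<in> D"
    and dirichlet_form_scale: "u \<in> D \<Longrightarrow> (\<lambda>x. a * u x) \<in> D"
    and dirichlet_form_symmetric: "u \<in> D \<Longrightarrow> v \<in> D \<Longrightarrow> Q u v = Q v u"
    and dirichlet_form_linear: "u \<in> D \<Longrightarrow> v \<in> D \<Longrightarrow> w \<in> D \<Longrightarrow>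
      Q (\<lambda>x. a * u x + b * v x) w = a * Q u w + b * Q v w"
    and dirichlet_form_nonneg: "u \<in> D \<Longrightarrow> 0 \<le> Q u u"
    and dirichlet_form_closed: "\<forall>s. (\<forall>n. s n \<in> D) \<and>
          (\<forall>e>0. \<exists>N. \<forall>n\<ge>N. \<forall>k\<ge>N. form_normsq M Q (\<lambda>x. s n x - s k x) < e)
        \<longrightarrow> (\<exists>u\<in>D. (\<lambda>n. form_normsq M Q (\<lambda>x. s n x - u x)) \<longlonglongrightarrow> 0)"
  using assms unfolding dirichlet_form_def by - (elim conjE, blast)+

lemma integrable_mult_L2:
  assumes "f \<in> L2 M" "g \<in> L2 M"
  shows "integrable M (\<lambda>x. f x * g x)"
proof (rule Bochner_Integration.integrable_bound)
  show "integrable M (\<lambda>x. (f x)\<^sup>2 + (g x)\<^sup>2)" using assms unfolding L2_def by auto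
  have "\<bar>a * b\<bar> \<le> a\<^sup>2 + b\<^sup>2" for a b :: real
    using sum_squares_bound[of "\<bar>a\<bar>" "\<bar>b\<bar>"] abs_ge_zero[of "a * b"]
    unfolding abs_mult power2_abs by linarith
  then show "AE x in M. norm (f x * g x) \<le> norm ((f x)\<^sup>2 + (g x)\<^sup>2)" by simp
qed (use assms in \<open>auto simp: L2_def\<close>)

lemma l2_inner_self_nonneg: "0 \<le> l2_inner M f f"
  unfolding l2_inner_def by simp

lemma l2_inner_self_eq_0_iff:
  assumes "f \<in> L2 M"
  shows "l2_inner M f f = 0 \<longleftrightarrow> (AE x in M. f x = 0)"
proof -
  have "l2_inner M f f = 0 \<longleftrightarrow> (AE x in M. f x * f x = 0)"
    unfolding l2_inner_def
    by (rule integral_nonneg_eq_0_iff_AE) (auto intro: integrable_mult_L2[OF assms assms])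
  then show ?thesis by simp
qed

lemma dirichlet_form_semi_inner_product:
  assumes "dirichlet_form M D Q"
  shows "semi_inner_product D (form_inner M Q)"
proof
  fix u v w a b
  assume uv: "u \<in> D" "v \<in> D"
  show "lin_comb a u b v \<in> D"
    unfolding lin_comb_def using assms uv by (intro dirichlet_form_add dirichlet_form_scale)
  show "form_inner M Q u v = form_inner M Q v u"
    using dirichlet_form_symmetric[OF assms uv] unfolding form_inner_def l2_inner_def
    by (simp add: mult.commute)
  show "0 \<le> form_inner M Q u u"
    using dirichlet_form_nonneg[OF assms uv(1)] l2_inner_self_nonneg unfolding form_inner_def
    by (metis add_nonneg_nonneg)
  assume "w \<in> D"
  then have L2: "u \<in> L2 M" "v \<in> L2 M" "w \<in> L2 M" using assms uv by (auto intro: dirichlet_form_L2)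
  have "l2_inner M (lin_comb a u b v) w = a * l2_inner M u w + b * l2_inner M v w"
    unfolding l2_inner_def lin_comb_def using integrable_mult_L2[OF L2(1,3)] integrable_mult_L2[OF L2(2,3)]
    by (simp add: distrib_right mult.assoc)
  then show "form_inner M Q (lin_comb a u b v) w = a * form_inner M Q u w + b * form_inner M Q v w"
    using dirichlet_form_linear[OF assms uv \<open>w \<in> D\<close>] unfolding form_inner_def lin_comb_def
    by (simp add: algebra_simps)
qed

lemma dirichlet_form_complete:
  assumes "dirichlet_form M D Q" and "\<forall>u\<in>D. \<forall>v\<in>D. Q' u v = Q u v"
  shows "form_complete D (form_inner M Q')"
  unfolding form_complete_def
proof (intro allI impI, elim conjE)
  interpret semi_inner_product D "form_inner M Q" by (rule dirichlet_form_semi_inner_product[OF assms(1)])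
  have same: "form_inner M Q' (\<lambda>x. u x - v x) (\<lambda>x. u x - v x) = form_normsq M Q (\<lambda>x. u x - v x)"
    if "u \<in> D" "v \<in> D" for u v
    using assms(2) diff_closed[OF that]
    unfolding form_inner_def form_normsq_def l2_inner_def l2_normsq_def by (simp add: power2_eq_square)
  fix s :: "nat \<Rightarrow> 'a \<Rightarrow> real" assume s: "\<forall>n. s n \<in> D"
    and "\<forall>e>0. \<exists>N. \<forall>n\<ge>N. \<forall>k\<ge>N. form_inner M Q' (\<lambda>x. s n x - s k x) (\<lambda>x. s n x - s k x) < e"
  then have "\<forall>e>0. \<exists>N. \<forall>n\<ge>N. \<forall>k\<ge>N. form_normsq M Q (\<lambda>x. s n x - s k x) < e"
    using same by simp
  then obtain u where "u \<in> D" "(\<lambda>n. form_normsq M Q (\<lambda>x. s n x - u x)) \<longlonglongrightarrow> 0"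
    using dirichlet_form_closed[OF assms(1)] s by blast
  then show "\<exists>u\<in>D. (\<lambda>n. form_inner M Q' (\<lambda>x. s n x - u x) (\<lambda>x. s n x - u x)) \<longlonglongrightarrow> 0"
    using same s by auto
qed

lemma dirichlet_form_orthogonal_self:
  assumes "dirichlet_form M D Q" "u \<in> D" "form_inner M Q u u = 0"
  shows "AE x in M. u x = 0"
proof -
  have "l2_inner M u u = 0"
    using assms(3) dirichlet_form_nonneg[OF assms(1,2)] l2_inner_self_nonneg[of M u]
    unfolding form_inner_def by linarith
  then show ?thesis using l2_inner_self_eq_0_iff dirichlet_form_L2[OF assms(1,2)] by blast
qed

lemma Lprime_graph_minus_iff:
  assumes "dirichlet_form M Dsharp Qsharp"
  shows "(u, (\<lambda>x. - u x)) \<in> Lprime_graph M D Dsharp Qsharp \<longleftrightarrow>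
    u \<in> Dsharp \<and> (\<forall>v\<in>D. form_inner M Qsharp u v = 0)"
proof -
  have "(\<lambda>x. - u x) \<in> L2 M" if "u \<in> Dsharp"
    using dirichlet_form_L2[OF assms dirichlet_form_scale[OF assms that, of "-1"]] by simp
  then show ?thesis
    unfolding Lprime_graph_def form_inner_def l2_inner_def by (auto simp: add_eq_0_iff)
qed

lemma orthogonal_complement_nontrivial:
  assumes "dirichlet_form M D Q" "dirichlet_form M Dsharp Qsharp" "D \<subseteq> Dsharp"
    and "\<forall>u\<in>D. \<forall>v\<in>D. Qsharp u v = Q u v"
    and "w \<in> Dsharp" "w \<notin> D"
  obtains u where "u \<in> Dsharp" "\<forall>v\<in>D. form_inner M Qsharp u v = 0" "\<not> (AE x in M. u x = 0)"
proof -
  interpret Dsharp: semi_inner_product Dsharp "form_inner M Qsharp"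
    by (rule dirichlet_form_semi_inner_product[OF assms(2)])
  interpret D: semi_inner_product D "form_inner M Q"
    by (rule dirichlet_form_semi_inner_product[OF assms(1)])
  obtain u0 where "u0 \<in> D" and orth: "\<And>v. v \<in> D \<Longrightarrow> form_inner M Qsharp (\<lambda>x. w x - u0 x) v = 0"
    using Dsharp.projection_exists[OF assms(3) D.lin_comb_closed dirichlet_form_zero[OF assms(1)]
        dirichlet_form_complete[OF assms(1,4)] \<open>w \<in> Dsharp\<close>] by blast
  have "\<not> (AE x in M. w x - u0 x = 0)"
  proof
    assume "AE x in M. w x - u0 x = 0"
    then have "AE x in M. u0 x = w x" by eventually_elim simp
    moreover have "w \<in> borel_measurable M"
      using dirichlet_form_L2[OF assms(2) \<open>w \<in> Dsharp\<close>] unfolding L2_def by simp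
    ultimately show False
      using dirichlet_form_AE_closed[OF assms(1) \<open>u0 \<in> D\<close>] \<open>w \<notin> D\<close> by blast
  qed
  moreover have "(\<lambda>x. w x - u0 x) \<in> Dsharp"
    using assms(3) \<open>u0 \<in> D\<close> \<open>w \<in> Dsharp\<close> by (auto intro: Dsharp.diff_closed)
  ultimately show thesis using that orth by blast
qed

theorem mainTheorem2:
  fixes M :: "'a measure"
    and D Dsharp :: "('a \<Rightarrow> real) set"
    and Q Qsharp :: "('a \<Rightarrow> real) \<Rightarrow> ('a \<Rightarrow> real) \<Rightarrow> real"
  assumes "sigma_finite_measure M"
    and "dirichlet_form M D Q"
    and "dirichlet_form M Dsharp Qsharp"
    and "D \<subseteq> Dsharp"
    and "\<forall>u\<in>D. \<forall>v\<in>D. Qsharp u v = Q u v"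
  shows "D = Dsharp \<longleftrightarrow>
    \<not> (\<exists>u. (u, (\<lambda>x. - u x)) \<in> Lprime_graph M D Dsharp Qsharp \<and> \<not> (AE x in M. u x = 0))"
  unfolding Lprime_graph_minus_iff[OF assms(3)]
proof
  assume "D = Dsharp"
  have "AE x in M. u x = 0" if "u \<in> Dsharp" "\<forall>v\<in>D. form_inner M Qsharp u v = 0" for u
    using dirichlet_form_orthogonal_self[OF assms(3) that(1)] that \<open>D = Dsharp\<close> by blast
  then show "\<not> (\<exists>u. (u \<in> Dsharp \<and> (\<forall>v\<in>D. form_inner M Qsharp u v = 0)) \<and> \<not> (AE x in M. u x = 0))"
    by blast
next
  assume "\<not> (\<exists>u. (u \<in> Dsharp \<and> (\<forall>v\<in>D. form_inner M Qsharp u v = 0)) \<and> \<not> (AE x in M. u x = 0))"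
  then show "D = Dsharp"
    using orthogonal_complement_nontrivial[OF assms(2-5)] assms(4) by blast
qed

end
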